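(* Let $\tau>0$, $a\in\mathbb{R}$, $\varepsilon>0$, and let $v:[0,\tau]\times\mathbb{R}\to\mathbb{R}$ satisfy: (i) for every $t\in[0,\tau]$, the function $x\mapsto v(t,x)$ is decreasing (nonincreasing); (ii) for every Lipschitz curve $t\mapsto\gamma(t)$ with $\dot\gamma(t)\ge a-\varepsilon$, the function $t\mapsto v(t,\gamma(t))$ is decreasing (nonincreasing). Let $y,z:[0,\tau]\to\mathbb{R}$ be Lipschitz with $y(0)=z(0)=0$ and $\dot y(t)\ge a$, $\dot z(t)\ge a$ for a.e. $t\in[0,\tau]$. Define $v_{max}=\sup_{t,x}v(t,x)$, $v_{min}=\inf_{t,x}v(t,x)$ and $\delta(t)=\sup_{0<s<t}|y(s)-z(s)|$. Then for every $t\in[0,\tau]$, $$\int_0^t\big|v(s,y(s))-v(s,z(s))\big|\,ds\;\le\;2\delta(t)\cdot\frac{v_{max}-v_{min}}{\varepsilon}.$$ *)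

theory Defs
  imports "HOL-Analysis.Analysis"
begin

definition lip_curve_slope_ge :: "real \<Rightarrow> real \<Rightarrow> (real \<Rightarrow> real) \<Rightarrow> bool" where
  "lip_curve_slope_ge tau c g \<longleftrightarrow>
     (\<exists>L. L-lipschitz_on {0..tau} g) \<and>
     (AE t in lborel. t \<in> {0<..<tau} \<longrightarrow>
        (\<exists>D. (g has_real_derivative D) (at t) \<and> D \<ge> c))"

definition vmax :: "real \<Rightarrow> (real \<Rightarrow> real \<Rightarrow> real) \<Rightarrow> ereal" where
  "vmax tau v = (SUP p \<in> {0..tau} \<times> UNIV. ereal (v (fst p) (snd p)))"

definition vmin :: "real \<Rightarrow> (real \<Rightarrow> real \<Rightarrow> real) \<Rightarrow> ereal" where
  "vmin tau v = (INF p \<in> {0..tau} \<times> UNIV. ereal (v (fst p) (snd p)))"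

text \<open>delta(t) = sup over 0<s<t of |y s - z s|, with the convention sup of the empty set = 0.\<close>
definition delta :: "(real \<Rightarrow> real) \<Rightarrow> (real \<Rightarrow> real) \<Rightarrow> real \<Rightarrow> ereal" where
  "delta y z t = max 0 (SUP s \<in> {0<..<t}. ereal \<bar>y s - z s\<bar>)"

end

theory Submission
  imports Defs
begin

text \<open>Let \<open>d\<close> bound \<open>|y - z|\<close>. Since \<open>v\<close> decreases in \<open>x\<close> and \<open>z\<close> lies between \<open>y - d\<close> and \<open>y + d\<close>,
  the integrand is at most \<open>F s - G s\<close> with \<open>F s = v s (y s - d)\<close> and \<open>G s = v s (y s + d)\<close>.
  The curve \<open>r \<mapsto> y r + d - eps (r - s)\<close> has slope at least \<open>a - eps\<close> and passes from
  \<open>y s + d\<close> at time \<open>s\<close> to \<open>y (s + h) - d\<close> at time \<open>s + h\<close>, \<open>h = 2 d / eps\<close>; hence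
  \<open>F (s + h) \<le> G s\<close>. So \<open>F\<close> is dominated by \<open>G\<close> delayed by \<open>h\<close>, and the integral of \<open>F - G\<close>
  collapses to two boundary pieces of length \<open>h\<close>, bounded by \<open>h (sup v - inf v)\<close>.\<close>

lemma lip_curve_slope_ge_add_linear:
  assumes "lip_curve_slope_ge tau c g" and "c' \<le> c + k"
  shows "lip_curve_slope_ge tau c' (\<lambda>s. g s + k * s + b)"
proof -
  obtain L where L: "L-lipschitz_on {0..tau} g"
    and slope: "AE t in lborel. t \<in> {0<..<tau} \<longrightarrow> (\<exists>D. (g has_real_derivative D) (at t) \<and> D \<ge> c)"
    using assms(1) unfolding lip_curve_slope_ge_def by blast
  from L have "(L + \<bar>k\<bar> * 1 + 0)-lipschitz_on {0..tau} (\<lambda>s. g s + k * s + b)"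
    by (intro lipschitz_intros)
  moreover from slope have "AE t in lborel. t \<in> {0<..<tau} \<longrightarrow>
      (\<exists>D. ((\<lambda>s. g s + k * s + b) has_real_derivative D) (at t) \<and> D \<ge> c')"
  proof (rule eventually_mono, intro impI)
    fix t assume "t \<in> {0<..<tau} \<longrightarrow> (\<exists>D. (g has_real_derivative D) (at t) \<and> D \<ge> c)"
      and "t \<in> {0<..<tau}"
    then obtain D where D: "(g has_real_derivative D) (at t)" "D \<ge> c"
      by blast
    have "((\<lambda>s. g s + k * s + b) has_real_derivative D + k) (at t)"
      using D(1) by (auto intro!: derivative_eq_intros)
    with D(2) assms(2) show "\<exists>D. ((\<lambda>s. g s + k * s + b) has_real_derivative D) (at t) \<and> D \<ge> c'"
      by (intro exI[of _ "D + k"]) auto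
  qed
  ultimately show ?thesis
    unfolding lip_curve_slope_ge_def by blast
qed

lemma integrable_on_antimono_on:
  fixes f :: "real \<Rightarrow> real"
  assumes "antimono_on {a..b} f"
  shows "f integrable_on {a..b}"
proof -
  have "mono_on {a..b} (\<lambda>s. - f s)"
    using assms by (auto intro!: monotone_onI dest: monotone_onD)
  then have "(\<lambda>s. - (- f s)) integrable_on {a..b}"
    by (intro integrable_neg integrable_on_mono_on)
  then show ?thesis
    by simp
qed

lemma integrable_on_abs_diff_antimono_on:
  fixes f g :: "real \<Rightarrow> real"
  assumes "antimono_on {a..b} f" and "antimono_on {a..b} g"
  shows "(\<lambda>s. \<bar>f s - g s\<bar>) integrable_on {a..b}"
proof -
  have "antimono_on {a..b} (\<lambda>s. max (f s) (g s))" "antimono_on {a..b} (\<lambda>s. min (f s) (g s))"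
    using assms unfolding monotone_on_def by (metis max.mono min.mono)+
  then have "(\<lambda>s. max (f s) (g s) - min (f s) (g s)) integrable_on {a..b}"
    by (intro integrable_diff integrable_on_antimono_on)
  moreover have "(\<lambda>s. \<bar>f s - g s\<bar>) = (\<lambda>s. max (f s) (g s) - min (f s) (g s))"
    by (auto simp: fun_eq_iff)
  ultimately show ?thesis
    by simp
qed

lemma integral_diff_le_delay:
  fixes F G :: "real \<Rightarrow> real"
  assumes F: "antimono_on {a..b} F" and G: "antimono_on {a..b} G"
    and "a \<le> b" and "0 \<le> h" and "G b \<le> F b"
    and delay: "\<And>s. s \<in> {a..b - h} \<Longrightarrow> F (s + h) \<le> G s"
  shows "integral {a..b} (\<lambda>s. F s - G s) \<le> h * (F a - G b)"
proof -
  have integrable: "f integrable_on {c..e}"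
    if "antimono_on {a..b} f" "{c..e} \<subseteq> {a..b}" for f :: "real \<Rightarrow> real" and c e
    using integrable_on_antimono_on monotone_on_subset that by blast
  have F_le: "F s \<le> F a" and G_ge: "G b \<le> G s" if "s \<in> {a..b}" for s
    using that monotone_onD[OF F, of a s] monotone_onD[OF G, of s b] by auto
  have int_F_le: "integral {c..e} F \<le> (e - c) * F a" if "a \<le> c" "c \<le> e" "e \<le> b" for c e
  proof -
    have "integral {c..e} F \<le> integral {c..e} (\<lambda>_. F a)"
      using integrable[OF F, of c e] F_le that by (intro integral_le) auto
    then show ?thesis
      using that by simp
  qed
  have int_G_ge: "(e - c) * G b \<le> integral {c..e} G" if "a \<le> c" "c \<le> e" "e \<le> b" for c e
  proof -
    have "integral {c..e} (\<lambda>_. G b) \<le> integral {c..e} G"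
      using integrable[OF G, of c e] G_ge that by (intro integral_le) auto
    then show ?thesis
      using that by simp
  qed
  have "integral {a..b} (\<lambda>s. F s - G s) = integral {a..b} F - integral {a..b} G"
    using integrable[OF F] integrable[OF G] by (intro integral_diff) auto
  also have "\<dots> \<le> h * (F a - G b)"
  proof (cases "b - a \<le> h")
    case True
    have "integral {a..b} F - integral {a..b} G \<le> (b - a) * F a - (b - a) * G b"
      using int_F_le[of a b] int_G_ge[of a b] \<open>a \<le> b\<close> by simp
    also have "\<dots> \<le> h * (F a - G b)"
      using True F_le[of b] \<open>G b \<le> F b\<close> \<open>a \<le> b\<close>
      by (simp add: mult_right_mono flip: right_diff_distrib)
    finally show ?thesis .
  next
    case False
    have "integral {a..b} F = integral {a..a + h} F + integral {a + h..b} F"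
      using integrable[OF F] False \<open>0 \<le> h\<close> by (intro Henstock_Kurzweil_Integration.integral_combine[symmetric]) auto
    moreover have "integral {a..a + h} F \<le> h * F a"
      using int_F_le[of a "a + h"] False \<open>0 \<le> h\<close> by simp
    moreover have "integral {a + h..b} F = integral {a..b - h} (F \<circ> (+) h)"
      using integral_shift_Icc_real[of a "b - h" F h] by (simp add: add.commute)
    moreover have "integral {a..b - h} (F \<circ> (+) h) \<le> integral {a..b - h} G"
    proof (intro integral_le)
      show "(F \<circ> (+) h) integrable_on {a..b - h}"
        using integrable[OF F, of "a + h" b] has_integral_shift_Icc_real[of F h _ a "b - h"] False \<open>0 \<le> h\<close>
        by (auto simp: integrable_on_def add.commute)
    qed (use integrable[OF G] delay \<open>0 \<le> h\<close> in \<open>auto simp: add.commute\<close>)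
    moreover have "integral {a..b} G = integral {a..b - h} G + integral {b - h..b} G"
      using integrable[OF G] False \<open>0 \<le> h\<close> by (intro Henstock_Kurzweil_Integration.integral_combine[symmetric]) auto
    moreover have "h * G b \<le> integral {b - h..b} G"
      using int_G_ge[of "b - h" b] False \<open>0 \<le> h\<close> by simp
    ultimately show ?thesis
      by (simp add: right_diff_distrib)
  qed
  finally show ?thesis .
qed

lemma integral_abs_diff_along_curves_le:
  fixes tau a eps d t :: real and v :: "real \<Rightarrow> real \<Rightarrow> real" and y z :: "real \<Rightarrow> real"
  assumes eps: "eps > 0"
    and mono_x: "\<And>t x1 x2. t \<in> {0..tau} \<Longrightarrow> x1 \<le> x2 \<Longrightarrow> v t x2 \<le> v t x1"
    and mono_curve: "\<And>g s1 s2. lip_curve_slope_ge tau (a - eps) g \<Longrightarrow>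
            s1 \<in> {0..tau} \<Longrightarrow> s2 \<in> {0..tau} \<Longrightarrow> s1 \<le> s2 \<Longrightarrow>
            v s2 (g s2) \<le> v s1 (g s1)"
    and y: "lip_curve_slope_ge tau a y" and z: "lip_curve_slope_ge tau a z"
    and t: "t \<in> {0..tau}" and d: "0 \<le> d"
    and close: "\<And>s. s \<in> {0<..<t} \<Longrightarrow> \<bar>y s - z s\<bar> \<le> d"
  shows "integral {0..t} (\<lambda>s. \<bar>v s (y s) - v s (z s)\<bar>)
           \<le> 2 * d / eps * (v 0 (y 0 - d) - v t (y t + d))"
proof -
  have along: "antimono_on {0..t} (\<lambda>s. v s (g s + k * s + b))"
    if "lip_curve_slope_ge tau a g" "- eps \<le> k" for g k b
  proof (intro monotone_onI)
    fix s1 s2 assume "s1 \<in> {0..t}" "s2 \<in> {0..t}" "s1 \<le> s2"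
    with t show "v s2 (g s2 + k * s2 + b) \<le> v s1 (g s1 + k * s1 + b)"
      using mono_curve[OF lip_curve_slope_ge_add_linear[OF that(1)]] that(2) by auto
  qed
  have shifted: "antimono_on {0..t} (\<lambda>s. v s (g s + b))" if "lip_curve_slope_ge tau a g" for g b
    using along[OF that, of 0 b] eps by simp
  define F where "F s = v s (y s - d)" for s
  define G where "G s = v s (y s + d)" for s
  define P where "P s = v s (y s)" for s
  define Q where "Q s = v s (z s)" for s
  define h where "h = 2 * d / eps"
  have "0 \<le> h"
    using d eps by (simp add: h_def)
  have F: "antimono_on {0..t} F" and G: "antimono_on {0..t} G"
    and P: "antimono_on {0..t} P" and Q: "antimono_on {0..t} Q"
    unfolding F_def G_def P_def Q_def using shifted[OF y, of "- d"] shifted[OF y, of d]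
      shifted[OF y, of 0] shifted[OF z, of 0] by simp_all
  have sandwich: "\<bar>P s - Q s\<bar> \<le> F s - G s" if "s \<in> {0<..<t}" for s
  proof -
    have "y s - d \<le> z s" "z s \<le> y s + d" "y s - d \<le> y s" "y s \<le> y s + d"
      using close[OF that] d by auto
    moreover have "s \<in> {0..tau}"
      using that t by auto
    ultimately show ?thesis
      unfolding F_def G_def P_def Q_def using mono_x by (smt (verit))
  qed
  have "(\<lambda>s. \<bar>P s - Q s\<bar>) integrable_on {0..t}"
    using P Q by (rule integrable_on_abs_diff_antimono_on)
  then have "integral {0..t} (\<lambda>s. \<bar>P s - Q s\<bar>) \<le> integral {0..t} (\<lambda>s. F s - G s)"
    using F G sandwich integral_le[of _ "{0<..<t}"]
    by (simp add: integral_open_interval_real integrable_on_open_interval_real integrable_diff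
        integrable_on_antimono_on)
  also have "\<dots> \<le> h * (F 0 - G t)"
  proof (rule integral_diff_le_delay[OF F G])
    show "G t \<le> F t"
      using mono_x[of t "y t - d" "y t + d"] t d by (simp add: F_def G_def)
    show "F (s + h) \<le> G s" if "s \<in> {0..t - h}" for s
    proof -
      have "s \<in> {0..t}" "s + h \<in> {0..t}" "s \<le> s + h"
        using that \<open>0 \<le> h\<close> by auto
      then have "v (s + h) (y (s + h) + - eps * (s + h) + (eps * s + d))
          \<le> v s (y s + - eps * s + (eps * s + d))"
        by (rule monotone_onD[OF along[OF y order_refl, of "eps * s + d"]])
      then show ?thesis
        using eps by (simp add: F_def G_def h_def algebra_simps)
    qed
  qed (use t \<open>0 \<le> h\<close> in auto)
  finally show ?thesis
    by (simp add: F_def G_def P_def Q_def h_def)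
qed

lemma delta_eq_ereal:
  assumes "bounded ((\<lambda>s. y s - z s) ` {0<..<t})"
  obtains d where "0 \<le> d" and "delta y z t = ereal d"
    and "\<And>s. s \<in> {0<..<t} \<Longrightarrow> \<bar>y s - z s\<bar> \<le> d"
proof -
  obtain B where "B > 0" and B: "\<forall>s \<in> {0<..<t}. \<bar>y s - z s\<bar> \<le> B"
    using assms by (auto simp: bounded_pos)
  have upper: "ereal \<bar>y s - z s\<bar> \<le> delta y z t" if "s \<in> {0<..<t}" for s
    unfolding delta_def using that by (intro max.coboundedI2 SUP_upper)
  have "0 \<le> delta y z t"
    by (simp add: delta_def)
  moreover have "delta y z t \<le> ereal B"
    unfolding delta_def using \<open>B > 0\<close> B by (intro max.boundedI SUP_least) auto
  ultimately obtain d where "delta y z t = ereal d"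
    by (cases "delta y z t") auto
  with upper \<open>0 \<le> delta y z t\<close> show thesis
    by (intro that[of d]) auto
qed

lemma vmax_upper: "s \<in> {0..tau} \<Longrightarrow> ereal (v s x) \<le> vmax tau v"
  unfolding vmax_def by (rule SUP_upper2[of "(s, x)"]) auto

lemma vmin_lower: "s \<in> {0..tau} \<Longrightarrow> vmin tau v \<le> ereal (v s x)"
  unfolding vmin_def by (rule INF_lower2[of "(s, x)"]) auto

theorem lemma4p1:
  fixes tau a eps :: real and v :: "real \<Rightarrow> real \<Rightarrow> real" and y z :: "real \<Rightarrow> real"
  assumes tau: "tau > 0" and eps: "eps > 0"
    and mono_x: "\<And>t x1 x2. t \<in> {0..tau} \<Longrightarrow> x1 \<le> x2 \<Longrightarrow> v t x2 \<le> v t x1"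
    and mono_curve: "\<And>g s1 s2. lip_curve_slope_ge tau (a - eps) g \<Longrightarrow>
            s1 \<in> {0..tau} \<Longrightarrow> s2 \<in> {0..tau} \<Longrightarrow> s1 \<le> s2 \<Longrightarrow>
            v s2 (g s2) \<le> v s1 (g s1)"
    and y: "lip_curve_slope_ge tau a y" and z: "lip_curve_slope_ge tau a z"
    and y0: "y 0 = 0" and z0: "z 0 = 0"
    and t: "t \<in> {0..tau}"
  shows "ereal (integral {0..t} (\<lambda>s. \<bar>v s (y s) - v s (z s)\<bar>))
           \<le> 2 * delta y z t * (vmax tau v - vmin tau v) / ereal eps"
proof -
  have "continuous_on {0..tau} (\<lambda>s. y s - z s)"
    using y z unfolding lip_curve_slope_ge_def by (blast intro: continuous_on_diff lipschitz_on_continuous_on)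
  then have "bounded ((\<lambda>s. y s - z s) ` {0..tau})"
    by (intro compact_imp_bounded compact_continuous_image) auto
  then have bounded: "bounded ((\<lambda>s. y s - z s) ` {0<..<t})"
    by (rule bounded_subset) (use t in auto)
  obtain d where d: "0 \<le> d" "delta y z t = ereal d"
    and close: "\<And>s. s \<in> {0<..<t} \<Longrightarrow> \<bar>y s - z s\<bar> \<le> d"
    using delta_eq_ereal[OF bounded] by blast
  have "integral {0..t} (\<lambda>s. \<bar>v s (y s) - v s (z s)\<bar>)
      \<le> 2 * d / eps * (v 0 (y 0 - d) - v t (y t + d))"
    by (rule integral_abs_diff_along_curves_le[OF eps mono_x mono_curve y z t d(1) close])
  then have "ereal (integral {0..t} (\<lambda>s. \<bar>v s (y s) - v s (z s)\<bar>))
      \<le> 2 * delta y z t * (ereal (v 0 (y 0 - d)) - ereal (v t (y t + d))) / ereal eps"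
    using d(2) eps by (simp add: mult.commute mult.left_commute)
  also have "\<dots> \<le> 2 * delta y z t * (vmax tau v - vmin tau v) / ereal eps"
  proof (intro ereal_divide_right_mono ereal_mult_left_mono)
    show "ereal (v 0 (y 0 - d)) - ereal (v t (y t + d)) \<le> vmax tau v - vmin tau v"
      using t by (intro ereal_minus_mono vmax_upper vmin_lower) auto
  qed (use d eps in auto)
  finally show ?thesis .
qed

end
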